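(* Let $\mathcal{A}$ be a complete deterministic timed automaton (CTA). If two valid reset-clocked words $\gamma_{r1},\gamma_{r2}$ of $\mathcal{A}$ reach the same symbolic state of $\mathcal{A}$, then $\gamma_{r1}\sim_{\mathscr{L}_r(\mathcal{A})}\gamma_{r2}$.
   Context: Let $\Sigma$ be a finite alphabet and $\mathcal{C}=\{c_1,\dots,c_m\}$ a finite set of clocks. A clock constraint is a finite conjunction of atomic constraints $c\sim k$ ($c\in\mathcal{C}$, $k\in\mathbb{N}$, ${\sim}\in\{<,\le,=,\ge,>\}$). A clock valuation is $\nu:\mathcal{C}\to\mathbb{R}_{\ge0}$ (a vector in $\mathbb{R}_{\ge0}^m$); $\nu+d$ adds $d$ to all clocks, $[\mathcal{B}\to0]\nu$ resets clocks in $\mathcal{B}$. A timed automaton is $\mathcal{A}=(\Sigma,L,l_0,F,\mathcal{C},\Delta)$ with finite location set $L$, initial $l_0$, accepting $F\subseteq L$, transitions $\Delta\subseteq L\times\Sigma\times\Phi(\mathcal{C})\times2^{\mathcal{C}}\times L$. A run over a delay-timed word $(\sigma_1,t_1)\cdots(\sigma_n,t_n)$ is $(l_0,\nu_0)\xrightarrow{t_1,\sigma_1}\cdots\xrightarrow{t_n,\sigma_n}(l_n,\nu_n)$ with $\nu_0\equiv0$ and transitions $(l_{i-1},\sigma_i,\phi_i,\mathcal{B}_i,l_i)\in\Delta$ with $\nu_{i-1}+t_i$ satisfying $\phi_i$ and $\nu_i=[\mathcal{B}_i\to0](\nu_{i-1}+t_i)$; accepting if $l_n\in F$. $\mathcal{A}$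 is a CTA if every delay-timed word has exactly one run. The reset-clocked word of the run is $(\sigma_1,\mathbf{v}_1,\mathbf{b}_1)\cdots(\sigma_n,\mathbf{v}_n,\mathbf{b}_n)$ with $\mathbf{v}_i=\nu_{i-1}+t_i$ and $\mathbf{b}_{i,j}=\top$ iff $c_j\in\mathcal{B}_i$ (else $\bot$). $\mathscr{L}_r(\mathcal{A})$ is the set of reset-clocked words of accepting runs. A reset-clocked word (any finite sequence in $(\Sigma\times\mathbb{R}_{\ge0}^m\times\{\top,\bot\}^m)^*$) is valid for $\mathcal{A}$ if it is the reset-clocked word of some run, and then reaches that run's final symbolic state $(l_n,\llbracket\nu_n\rrbracket)$. $resets(\cdot)$ returns $\mathbf{b}_1,\dots,\mathbf{b}_n$; $vw(\cdot)$ drops resets. Regions: with $\kappa(c)$ the largest integer in guards of $\mathcal{A}$ over $c$, $\nu,\nu'$ are region-equivalent iff (i) for all $c$, $\lfloor\nu(c)\rfloor=\lfloor\nu'(c)\rfloor$ or both exceed $\kappa(c)$; (ii) for $c$ with $\nu(c)\le\kappa(c)$, $\mathrm{frac}(\nu(c))=0$ iff $\mathrm{frac}(\nu'(c))=0$; (iii) for $c_i,c_j$ with $\nu(c_i)\le\kappa(c_i),\nu(c_j)\le\kappa(c_j)$, $\mathrm{frac}(\nu(c_i))\le\mathrm{frac}(\nu(c_j))$ iff $\mathrm{frac}(\nu'(c_i))\le\mathrm{frac}(\nu'(c_j))$; $\llbracket\nu\rrbracket$ denotes the region, symbolic states are pairs (location, region). A region word is a finite sequence of pairs $(\sigma,R)$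 with $R$ a region; a clocked word maps to its region word $\llbracket\cdot\rrbracket$ componentwise. $\mathit{vs}_{\mathcal{A}}(\gamma_r,\xi)$ is the set of reset-clocked $\gamma_r'$ with $\llbracket vw(\gamma_r')\rrbracket=\xi$ and $\gamma_r\gamma_r'$ valid for $\mathcal{A}$. The relation $\gamma_{r1}\sim_{\mathscr{L}_r(\mathcal{A})}\gamma_{r2}$ holds iff for every region word $\xi$ and all $\gamma_{r1}'\in\mathit{vs}_{\mathcal{A}}(\gamma_{r1},\xi)$, $\gamma_{r2}'\in\mathit{vs}_{\mathcal{A}}(\gamma_{r2},\xi)$: $\gamma_{r1}\gamma_{r1}'\in\mathscr{L}_r(\mathcal{A})$ iff $\gamma_{r2}\gamma_{r2}'\in\mathscr{L}_r(\mathcal{A})$, and $resets(\gamma_{r1}')=resets(\gamma_{r2}')$. *)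

theory Defs
  imports Main "HOL.Archimedean_Field" "HOL.Real"
begin

text \<open>Clocks are the elements of a finite type 'c (the finite clock set C);
  a clock valuation is a function 'c => real (a vector in R>=0^m).\<close>

datatype cmp = CLt | CLe | CEq | CGe | CGt

type_synonym 'c atom = "'c \<times> cmp \<times> nat"
type_synonym 'c guard = "'c atom list"
type_synonym 'c val = "'c \<Rightarrow> real"

fun cmp_sat :: "cmp \<Rightarrow> real \<Rightarrow> real \<Rightarrow> bool" where
  "cmp_sat CLt x k = (x < k)"
| "cmp_sat CLe x k = (x \<le> k)"
| "cmp_sat CEq x k = (x = k)"
| "cmp_sat CGe x k = (x \<ge> k)"
| "cmp_sat CGt x k = (x > k)"

definition guard_sat :: "'c guard \<Rightarrow> 'c val \<Rightarrow> bool" where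
  "guard_sat g \<nu> = (\<forall>(c, op, k) \<in> set g. cmp_sat op (\<nu> c) (real k))"

definition delay :: "'c val \<Rightarrow> real \<Rightarrow> 'c val" where
  "delay \<nu> d = (\<lambda>c. \<nu> c + d)"

definition reset :: "'c set \<Rightarrow> 'c val \<Rightarrow> 'c val" where
  "reset B \<nu> = (\<lambda>c. if c \<in> B then 0 else \<nu> c)"

type_synonym ('s, 'l, 'c) transition = "'l \<times> 's \<times> 'c guard \<times> 'c set \<times> 'l"

record ('s, 'l, 'c) ta =
  alpha :: "'s set"
  locs  :: "'l set"
  init  :: "'l"
  acc   :: "'l set"
  trans :: "('s, 'l, 'c) transition set"

definition ta_wf :: "('s, 'l, 'c) ta \<Rightarrow> bool" where
  "ta_wf A \<longleftrightarrow> finite (alpha A) \<and> finite (locs A) \<and> init A \<in> locs A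
     \<and> acc A \<subseteq> locs A \<and> finite (trans A)
     \<and> (\<forall>(l, \<sigma>, g, B, l') \<in> trans A. l \<in> locs A \<and> \<sigma> \<in> alpha A \<and> l' \<in> locs A)"

definition tword :: "('s, 'l, 'c) ta \<Rightarrow> ('s \<times> real) list \<Rightarrow> bool" where
  "tword A w \<longleftrightarrow> (\<forall>(\<sigma>, t) \<in> set w. \<sigma> \<in> alpha A \<and> 0 \<le> t)"

text \<open>A run from configuration (l, nu) over a delay-timed word, given by the
  sequence of transitions taken (the valuations are then determined).\<close>
fun is_run :: "('s, 'l, 'c) ta \<Rightarrow> 'l \<Rightarrow> 'c val \<Rightarrow> ('s \<times> real) list
      \<Rightarrow> ('s, 'l, 'c) transition list \<Rightarrow> bool" where
  "is_run A l \<nu> [] [] = True"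
| "is_run A l \<nu> ((\<sigma>, t) # w) ((l1, \<sigma>1, g, B, l2) # ds) =
     ((l1, \<sigma>1, g, B, l2) \<in> trans A \<and> l1 = l \<and> \<sigma>1 = \<sigma> \<and> guard_sat g (delay \<nu> t)
      \<and> is_run A l2 (reset B (delay \<nu> t)) w ds)"
| "is_run A l \<nu> _ _ = False"

text \<open>Reset-clocked word of a run: (sigma_i, nu_{i-1}+t_i, b_i), b_i c = True iff c reset.\<close>
type_synonym ('s, 'c) rcword = "('s \<times> 'c val \<times> ('c \<Rightarrow> bool)) list"

fun rcw_of :: "'c val \<Rightarrow> ('s \<times> real) list \<Rightarrow> ('s, 'l, 'c) transition list \<Rightarrow> ('s, 'c) rcword" where
  "rcw_of \<nu> ((\<sigma>, t) # w) ((l1, \<sigma>1, g, B, l2) # ds) =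
     (\<sigma>, delay \<nu> t, (\<lambda>c. c \<in> B)) # rcw_of (reset B (delay \<nu> t)) w ds"
| "rcw_of \<nu> _ _ = []"

fun final_of :: "'l \<Rightarrow> 'c val \<Rightarrow> ('s \<times> real) list \<Rightarrow> ('s, 'l, 'c) transition list \<Rightarrow> 'l \<times> 'c val" where
  "final_of l \<nu> ((\<sigma>, t) # w) ((l1, \<sigma>1, g, B, l2) # ds) =
     final_of l2 (reset B (delay \<nu> t)) w ds"
| "final_of l \<nu> _ _ = (l, \<nu>)"

definition zero_val :: "'c val" where "zero_val = (\<lambda>_. 0)"

definition run :: "('s, 'l, 'c) ta \<Rightarrow> ('s \<times> real) list \<Rightarrow> ('s, 'l, 'c) transition list \<Rightarrow> bool" where
  "run A w ds \<longleftrightarrow> tword A w \<and> is_run A (init A) zero_val w ds"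

definition CTA :: "('s, 'l, 'c) ta \<Rightarrow> bool" where
  "CTA A \<longleftrightarrow> ta_wf A \<and> (\<forall>w. tword A w \<longrightarrow> (\<exists>!ds. run A w ds))"

definition Lr :: "('s, 'l, 'c) ta \<Rightarrow> ('s, 'c) rcword set" where
  "Lr A = {rcw_of zero_val w ds | w ds. run A w ds \<and> fst (final_of (init A) zero_val w ds) \<in> acc A}"

definition valid_rc :: "('s, 'l, 'c) ta \<Rightarrow> ('s, 'c) rcword \<Rightarrow> bool" where
  "valid_rc A \<gamma> \<longleftrightarrow> (\<exists>w ds. run A w ds \<and> rcw_of zero_val w ds = \<gamma>)"

definition kappa :: "('s, 'l, 'c) ta \<Rightarrow> 'c \<Rightarrow> real" where
  "kappa A c = real (Max (insert 0 {k. \<exists>(l, \<sigma>, g, B, l') \<in> trans A. \<exists>op. (c, op, k) \<in> set g}))"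

definition region_equiv :: "('s, 'l, 'c) ta \<Rightarrow> 'c val \<Rightarrow> 'c val \<Rightarrow> bool" where
  "region_equiv A \<nu> \<nu>' \<longleftrightarrow>
     (\<forall>c. \<lfloor>\<nu> c\<rfloor> = \<lfloor>\<nu>' c\<rfloor> \<or> (\<nu> c > kappa A c \<and> \<nu>' c > kappa A c))
   \<and> (\<forall>c. \<nu> c \<le> kappa A c \<longrightarrow> (frac (\<nu> c) = 0 \<longleftrightarrow> frac (\<nu>' c) = 0))
   \<and> (\<forall>ci cj. \<nu> ci \<le> kappa A ci \<and> \<nu> cj \<le> kappa A cj \<longrightarrow>
        (frac (\<nu> ci) \<le> frac (\<nu> cj) \<longleftrightarrow> frac (\<nu>' ci) \<le> frac (\<nu>' cj)))"

definition region :: "('s, 'l, 'c) ta \<Rightarrow> 'c val \<Rightarrow> 'c val set" where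
  "region A \<nu> = {\<nu>'. (\<forall>c. 0 \<le> \<nu>' c) \<and> region_equiv A \<nu> \<nu>'}"

definition reaches :: "('s, 'l, 'c) ta \<Rightarrow> ('s, 'c) rcword \<Rightarrow> 'l \<times> 'c val set \<Rightarrow> bool" where
  "reaches A \<gamma> q \<longleftrightarrow> (\<exists>w ds. run A w ds \<and> rcw_of zero_val w ds = \<gamma> \<and>
       (let (l, \<nu>) = final_of (init A) zero_val w ds in q = (l, region A \<nu>)))"

definition resets :: "('s, 'c) rcword \<Rightarrow> ('c \<Rightarrow> bool) list" where
  "resets \<gamma> = map (\<lambda>(\<sigma>, v, b). b) \<gamma>"

definition region_word :: "('s, 'l, 'c) ta \<Rightarrow> ('s, 'c) rcword \<Rightarrow> ('s \<times> 'c val set) list" where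
  "region_word A \<gamma> = map (\<lambda>(\<sigma>, v, b). (\<sigma>, region A v)) \<gamma>"

definition vs :: "('s, 'l, 'c) ta \<Rightarrow> ('s, 'c) rcword \<Rightarrow> ('s \<times> 'c val set) list \<Rightarrow> ('s, 'c) rcword set" where
  "vs A \<gamma> \<xi> = {\<gamma>'. region_word A \<gamma>' = \<xi> \<and> valid_rc A (\<gamma> @ \<gamma>')}"

definition rc_equiv :: "('s, 'l, 'c) ta \<Rightarrow> ('s, 'c) rcword \<Rightarrow> ('s, 'c) rcword \<Rightarrow> bool" where
  "rc_equiv A \<gamma>1 \<gamma>2 \<longleftrightarrow>
     (\<forall>\<xi>. \<forall>\<gamma>1' \<in> vs A \<gamma>1 \<xi>. \<forall>\<gamma>2' \<in> vs A \<gamma>2 \<xi>.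
        (\<gamma>1 @ \<gamma>1' \<in> Lr A \<longleftrightarrow> \<gamma>2 @ \<gamma>2' \<in> Lr A) \<and> resets \<gamma>1' = resets \<gamma>2')"

end

theory Submission
  imports Defs
begin

(*
  Guards are unions of regions, so in a CTA the transition taken from a reachable
  configuration is determined by its location, the letter and the region of the
  clock values at which the guard is evaluated -- and these regions are exactly what
  a region word xi records. Hence, starting from two reachable configurations with
  the same location, any two runs whose reset-clocked words have region word xi take
  the same transitions: they perform the same resets and end in the same location.
  Since a reset-clocked word determines the delay-timed word, and a CTA has one run
  per word, membership in L_r(A) is decided by that final location.
*)

lemma is_run_length: "is_run A l \<nu> w d \<Longrightarrow> length w = length d"
  by (induction A l \<nu> w d rule: is_run.induct) auto

lemma is_run_append:
  "length u = length e \<Longrightarrow> final_of l \<nu> u e = (l', \<nu>') \<Longrightarrow>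
   is_run A l \<nu> (u @ w) (e @ d) \<longleftrightarrow> is_run A l \<nu> u e \<and> is_run A l' \<nu>' w d"
proof (induction u e arbitrary: l \<nu> rule: list_induct2)
  case (Cons a u x e)
  then show ?case by (cases a; cases x) auto
qed simp

lemma rcw_of_append:
  "length u = length e \<Longrightarrow> final_of l \<nu> u e = (l', \<nu>') \<Longrightarrow>
   rcw_of \<nu> (u @ w) (e @ d) = rcw_of \<nu> u e @ rcw_of \<nu>' w d"
proof (induction u e arbitrary: l \<nu> rule: list_induct2)
  case (Cons a u x e)
  then show ?case by (cases a; cases x) auto
qed simp

lemma final_of_append:
  "length u = length e \<Longrightarrow> final_of l \<nu> u e = (l', \<nu>') \<Longrightarrow>
   final_of l \<nu> (u @ w) (e @ d) = final_of l' \<nu>' w d"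
proof (induction u e arbitrary: l \<nu> rule: list_induct2)
  case (Cons a u x e)
  then show ?case by (cases a; cases x) auto
qed simp

lemma length_rcw_of: "length w = length d \<Longrightarrow> length (rcw_of \<nu> w d) = length w"
proof (induction w d arbitrary: \<nu> rule: list_induct2)
  case (Cons a w x d)
  then show ?case by (cases a; cases x) auto
qed simp

lemma resets_rcw_of:
  "length w = length d \<Longrightarrow> resets (rcw_of \<nu> w d) = map (\<lambda>(l, \<sigma>, g, B, l'). (\<lambda>c. c \<in> B)) d"
proof (induction w d arbitrary: \<nu> rule: list_induct2)
  case (Cons a w x d)
  then show ?case by (cases a; cases x) (auto simp: resets_def)
qed (simp add: resets_def)

lemma fst_final_of_same_transitions:
  "length w = length d \<Longrightarrow> length w' = length d \<Longrightarrow> fst (final_of l \<nu> w d) = fst (final_of l \<nu>' w' d)"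
proof (induction w d arbitrary: l \<nu> w' \<nu>' rule: list_induct2)
  case (Cons a w x d)
  then show ?case by (cases a; cases x; cases w') auto
qed simp

lemma rcw_of_eq_imp_word_eq:
  "length w = length d \<Longrightarrow> length w' = length d' \<Longrightarrow> rcw_of \<nu> w d = rcw_of \<nu> w' d' \<Longrightarrow> w = w'"
proof (induction w d arbitrary: \<nu> w' d' rule: list_induct2)
  case Nil
  then show ?case by (cases w'; cases d') auto
next
  case (Cons a w x d)
  obtain \<sigma> t where a: "a = (\<sigma>, t)" by fastforce
  obtain l \<sigma>1 g B l' where x: "x = (l, \<sigma>1, g, B, l')" by (cases x)
  from Cons.prems obtain \<sigma>' t' w'' l2 \<sigma>2 g' B' l2' d''
    where w': "w' = (\<sigma>', t') # w''" and d': "d' = (l2, \<sigma>2, g', B', l2') # d''"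
    using a x by (cases w'; cases d') auto
  have "delay \<nu> t = delay \<nu> t'" "B = B'"
    using Cons.prems a x w' d' by (auto simp: fun_eq_iff)
  then have "t = t'"
    by (auto simp: delay_def fun_eq_iff)
  then show ?case
    using Cons a x w' d' \<open>B = B'\<close> by auto
qed

lemma is_run_final_nonneg:
  "is_run A l \<nu> w d \<Longrightarrow> tword A w \<Longrightarrow> \<forall>c. 0 \<le> \<nu> c \<Longrightarrow> \<forall>c. 0 \<le> snd (final_of l \<nu> w d) c"
proof (induction A l \<nu> w d rule: is_run.induct)
  case (2 A l \<nu> \<sigma> t w l1 \<sigma>1 g B l2 ds)
  then have "\<forall>c. 0 \<le> reset B (delay \<nu> t) c" "tword A w"
    by (auto simp: reset_def delay_def tword_def)
  with 2 show ?case by auto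
qed auto

lemma cmp_sat_transfer:
  fixes x y K :: real
  assumes same_int: "\<lfloor>x\<rfloor> = \<lfloor>y\<rfloor> \<or> (K < x \<and> K < y)"
    and frac_x: "x \<le> K \<longrightarrow> (frac x = 0 \<longleftrightarrow> frac y = 0)"
    and frac_y: "y \<le> K \<longrightarrow> (frac y = 0 \<longleftrightarrow> frac x = 0)"
    and "real k \<le> K" and "cmp_sat op x (real k)"
  shows "cmp_sat op y (real k)"
proof (cases "\<lfloor>x\<rfloor> = \<lfloor>y\<rfloor>")
  case True
  have less_iff: "z < real k \<longleftrightarrow> \<lfloor>z\<rfloor> < int k" for z :: real
    by (simp add: floor_less_iff)
  have eq_iff: "z = real k \<longleftrightarrow> \<lfloor>z\<rfloor> = int k \<and> frac z = 0" for z :: real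
    by (metis add.right_neutral diff_eq_eq floor_of_nat frac_def frac_of_int of_int_of_nat_eq)
  \<comment> \<open>either one of x, y is at most K, or both lie strictly between k and k + 1\<close>
  have "\<lfloor>x\<rfloor> = int k \<Longrightarrow> frac x = 0 \<longleftrightarrow> frac y = 0"
    using frac_x frac_y True \<open>real k \<le> K\<close> by (smt (verit) eq_iff)
  then show ?thesis
    using assms(5) True less_iff[of x] less_iff[of y] eq_iff[of x] eq_iff[of y] by (cases op) auto
next
  case False
  then show ?thesis
    using same_int assms(4,5) by (cases op) auto
qed

lemma guard_const_le_kappa:
  assumes "finite (trans A)" and "(l, \<sigma>, g, B, l') \<in> trans A" and "(c, op, k) \<in> set g"
  shows "real k \<le> kappa A c"
proof -
  let ?S = "{k. \<exists>(l, \<sigma>, g, B, l') \<in> trans A. \<exists>op. (c, op, k) \<in> set g}"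
  have "?S \<subseteq> (\<lambda>(c, op, k). k) ` (\<Union>(l, \<sigma>, g, B, l') \<in> trans A. set g)"
    by (force simp: image_iff)
  moreover have "finite ((\<lambda>(c, op, k). k) ` (\<Union>(l, \<sigma>, g, B, l') \<in> trans A. set g))"
    using assms(1) by (auto simp: case_prod_beta)
  ultimately have "finite ?S"
    by (rule finite_subset)
  moreover have "k \<in> ?S" using assms(2,3) by blast
  ultimately show ?thesis unfolding kappa_def by simp
qed

lemma region_eq_imp_region_equiv:
  assumes "region A v = region A v'" and "\<forall>c. 0 \<le> v' c"
  shows "region_equiv A v v'"
proof -
  have "v' \<in> region A v'"
    using assms(2) by (auto simp: region_def region_equiv_def)
  then show ?thesis
    using assms(1) by (auto simp: region_def)
qed

lemma guard_sat_region_invariant: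
  assumes "finite (trans A)" and "(l, \<sigma>, g, B, l') \<in> trans A"
    and "region A v = region A v'" and "\<forall>c. 0 \<le> v c" and "\<forall>c. 0 \<le> v' c"
    and "guard_sat g v"
  shows "guard_sat g v'"
  unfolding guard_sat_def
proof (clarify)
  fix c op k
  assume atom: "(c, op, k) \<in> set g"
  then have "cmp_sat op (v c) (real k)" using assms(6) by (auto simp: guard_sat_def)
  moreover have "region_equiv A v v'" "region_equiv A v' v"
    using assms(3-5) by (simp_all add: region_eq_imp_region_equiv)
  ultimately show "cmp_sat op (v' c) (real k)"
    using cmp_sat_transfer[of "v c" "v' c" "kappa A c" k op] guard_const_le_kappa[OF assms(1,2) atom]
    unfolding region_equiv_def by metis
qed

definition reachable_config :: "('s, 'l, 'c) ta \<Rightarrow> 'l \<Rightarrow> 'c val \<Rightarrow> bool" where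
  "reachable_config A l \<nu> \<longleftrightarrow> (\<exists>u e. run A u e \<and> final_of (init A) zero_val u e = (l, \<nu>))"

lemma reachable_config_nonneg: "reachable_config A l \<nu> \<Longrightarrow> 0 \<le> \<nu> c"
  using is_run_final_nonneg[of A "init A" zero_val]
  by (fastforce simp: reachable_config_def run_def zero_val_def)

lemma run_snoc:
  assumes "run A u e" and "final_of (init A) zero_val u e = (l, \<nu>)"
    and "\<sigma> \<in> alpha A" and "0 \<le> t"
    and "(l, \<sigma>, g, B, l') \<in> trans A" and "guard_sat g (delay \<nu> t)"
  shows "run A (u @ [(\<sigma>, t)]) (e @ [(l, \<sigma>, g, B, l')])"
    and "final_of (init A) zero_val (u @ [(\<sigma>, t)]) (e @ [(l, \<sigma>, g, B, l')]) = (l', reset B (delay \<nu> t))"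
proof -
  have len: "length u = length e"
    using assms(1) by (auto simp: run_def dest: is_run_length)
  show "run A (u @ [(\<sigma>, t)]) (e @ [(l, \<sigma>, g, B, l')])"
    and "final_of (init A) zero_val (u @ [(\<sigma>, t)]) (e @ [(l, \<sigma>, g, B, l')]) = (l', reset B (delay \<nu> t))"
    using assms is_run_append[OF len assms(2)] final_of_append[OF len assms(2)]
    by (auto simp: run_def tword_def)
qed

lemma reachable_config_step:
  assumes "reachable_config A l \<nu>" and "\<sigma> \<in> alpha A" and "0 \<le> t"
    and "(l, \<sigma>, g, B, l') \<in> trans A" and "guard_sat g (delay \<nu> t)"
  shows "reachable_config A l' (reset B (delay \<nu> t))"
  using assms run_snoc unfolding reachable_config_def by metis

lemma CTA_enabled_transition_unique:
  assumes "CTA A" and "reachable_config A l \<nu>" and "\<sigma> \<in> alpha A" and "0 \<le> t"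
    and "(l, \<sigma>, g, B, l') \<in> trans A" and "guard_sat g (delay \<nu> t)"
    and "(l, \<sigma>, g', B', l'') \<in> trans A" and "guard_sat g' (delay \<nu> t)"
  shows "(g, B, l') = (g', B', l'')"
proof -
  obtain u e where "run A u e" "final_of (init A) zero_val u e = (l, \<nu>)"
    using assms(2) by (auto simp: reachable_config_def)
  then have "run A (u @ [(\<sigma>, t)]) (e @ [(l, \<sigma>, g, B, l')])"
    and "run A (u @ [(\<sigma>, t)]) (e @ [(l, \<sigma>, g', B', l'')])"
    using run_snoc(1)[OF _ _ assms(3,4)] assms(5-8) by blast+
  then show ?thesis
    using assms(1) by (auto simp: CTA_def run_def)
qed

lemma CTA_same_region_word_same_transitions:
  assumes "CTA A" and "reachable_config A l \<nu>" and "reachable_config A l \<nu>'"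
    and "is_run A l \<nu> w d" and "tword A w" and "is_run A l \<nu>' w' d'" and "tword A w'"
    and "region_word A (rcw_of \<nu> w d) = region_word A (rcw_of \<nu>' w' d')"
  shows "d = d'"
  using assms(2-)
proof (induction w arbitrary: l \<nu> \<nu>' d w' d')
  case Nil
  then show ?case
    by (cases d; cases w'; cases d'; auto simp: region_word_def)
next
  case (Cons a w)
  obtain \<sigma> t where a: "a = (\<sigma>, t)" by fastforce
  from Cons.prems(3) a obtain g B l1 d1 where d: "d = (l, \<sigma>, g, B, l1) # d1"
    by (cases d) auto
  from Cons.prems(5,7) a d obtain t' w1' g' B' l1' d1'
    where w': "w' = (\<sigma>, t') # w1'" and d': "d' = (l, \<sigma>, g', B', l1') # d1'"
    by (cases w'; cases d'; auto simp: region_word_def)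
  have step: "(l, \<sigma>, g, B, l1) \<in> trans A" "guard_sat g (delay \<nu> t)"
    "(l, \<sigma>, g', B', l1') \<in> trans A" "guard_sat g' (delay \<nu>' t')"
    using Cons.prems(3,5) a d w' d' by auto
  have delays: "\<sigma> \<in> alpha A" "0 \<le> t" "0 \<le> t'" "tword A w" "tword A w1'"
    using Cons.prems(4,6) a w' by (auto simp: tword_def)
  have "region A (delay \<nu> t) = region A (delay \<nu>' t')"
    using Cons.prems(7) a d w' d' by (simp add: region_word_def)
  moreover have "\<forall>c. 0 \<le> delay \<nu> t c" "\<forall>c. 0 \<le> delay \<nu>' t' c"
    using reachable_config_nonneg[OF Cons.prems(1)] reachable_config_nonneg[OF Cons.prems(2)]
      delays(2,3) by (simp_all add: delay_def)
  moreover have "finite (trans A)"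
    using assms(1) by (simp add: CTA_def ta_wf_def)
  ultimately have "guard_sat g (delay \<nu>' t')"
    using guard_sat_region_invariant step(1,2) by metis
  then have same_step: "(g, B, l1) = (g', B', l1')"
    using CTA_enabled_transition_unique[OF assms(1) Cons.prems(2) delays(1,3) step(1)] step(3,4)
    by blast
  have "d1 = d1'"
  proof (rule Cons.IH)
    show "reachable_config A l1 (reset B (delay \<nu> t))"
      using reachable_config_step[OF Cons.prems(1) delays(1,2) step(1,2)] .
    show "reachable_config A l1 (reset B' (delay \<nu>' t'))"
      using reachable_config_step[OF Cons.prems(2) delays(1,3) step(3,4)] same_step by simp
    show "is_run A l1 (reset B (delay \<nu> t)) w d1"
      using Cons.prems(3) a d by simp
    show "is_run A l1 (reset B' (delay \<nu>' t')) w1' d1'"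
      using Cons.prems(5) w' d' same_step by simp
    show "region_word A (rcw_of (reset B (delay \<nu> t)) w d1) =
        region_word A (rcw_of (reset B' (delay \<nu>' t')) w1' d1')"
      using Cons.prems(7) a d w' d' by (simp add: region_word_def)
  qed (fact delays(4), fact delays(5))
  then show ?case
    using d d' same_step by simp
qed

lemma CTA_run_determined_by_rcw_of:
  assumes "CTA A" and "run A w d" and "run A w' d'"
    and "rcw_of zero_val w d = rcw_of zero_val w' d'"
  shows "w = w'" and "d = d'"
proof -
  have "length w = length d" and "length w' = length d'"
    using assms(2,3) by (auto simp: run_def dest: is_run_length)
  then show "w = w'"
    using assms(4) by (rule rcw_of_eq_imp_word_eq)
  moreover have "\<exists>!d. run A w d"
    using assms(1,2) by (simp add: CTA_def run_def)
  ultimately show "d = d'"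
    using assms(2,3) by auto
qed

lemma CTA_rcw_of_in_Lr_iff:
  assumes "CTA A" and "run A w d"
  shows "rcw_of zero_val w d \<in> Lr A \<longleftrightarrow> fst (final_of (init A) zero_val w d) \<in> acc A"
  using assms CTA_run_determined_by_rcw_of unfolding Lr_def by blast

lemma CTA_run_split:
  assumes "CTA A" and "run A w d" and "rcw_of zero_val w d = \<gamma> @ \<gamma>'"
    and "run A u e" and "rcw_of zero_val u e = \<gamma>"
    and "final_of (init A) zero_val u e = (l, \<nu>)"
  obtains w' d' where "w = u @ w'" and "d = e @ d'"
    and "is_run A l \<nu> w' d'" and "tword A w'" and "rcw_of \<nu> w' d' = \<gamma>'"
proof -
  define n where "n = length u"
  have len: "length w = length d" and len_u: "length u = length e"
    using assms(2,4) by (auto simp: run_def dest: is_run_length)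
  then have len_take: "length (take n w) = length (take n d)"
    by simp
  obtain l0 \<nu>0 where fin: "final_of (init A) zero_val (take n w) (take n d) = (l0, \<nu>0)"
    by fastforce
  have "is_run A (init A) zero_val (take n w) (take n d)"
    and rest: "is_run A l0 \<nu>0 (drop n w) (drop n d)"
    using assms(2) is_run_append[OF len_take fin, of A "drop n w" "drop n d"]
    by (simp_all add: run_def)
  moreover have "tword A (take n w)" and tw_rest: "tword A (drop n w)"
    using assms(2) by (auto simp: run_def tword_def dest: in_set_takeD in_set_dropD)
  ultimately have run_take: "run A (take n w) (take n d)"
    by (simp add: run_def)
  have split: "\<gamma> @ \<gamma>' = rcw_of zero_val (take n w) (take n d) @ rcw_of \<nu>0 (drop n w) (drop n d)"
    using rcw_of_append[OF len_take fin, of "drop n w" "drop n d"] assms(3) by simp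
  have "length \<gamma> = n"
    using length_rcw_of[OF len_u, of zero_val] assms(5) n_def by simp
  moreover have "length (\<gamma> @ \<gamma>') = length w"
    using length_rcw_of[OF len, of zero_val] assms(3) by simp
  ultimately have "length (rcw_of zero_val (take n w) (take n d)) = length \<gamma>"
    using length_rcw_of[OF len_take] by simp
  then have "rcw_of zero_val (take n w) (take n d) = \<gamma>" and rest_rcw: "rcw_of \<nu>0 (drop n w) (drop n d) = \<gamma>'"
    using split by simp_all
  then have "take n w = u" and "take n d = e"
    using CTA_run_determined_by_rcw_of[OF assms(1) run_take assms(4)] assms(5) by simp_all
  moreover from this have "(l0, \<nu>0) = (l, \<nu>)"
    using fin assms(6) by simp
  ultimately show thesis
    using that[of "drop n w" "drop n d"] rest tw_rest rest_rcw by (metis append_take_drop_id prod.inject)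
qed

lemma CTA_vs_continuation:
  assumes "CTA A" and "reaches A \<gamma> (l, R)" and "\<gamma>' \<in> vs A \<gamma> \<xi>"
  obtains \<nu> w d where "reachable_config A l \<nu>" and "is_run A l \<nu> w d" and "tword A w"
    and "rcw_of \<nu> w d = \<gamma>'" and "\<gamma> @ \<gamma>' \<in> Lr A \<longleftrightarrow> fst (final_of l \<nu> w d) \<in> acc A"
proof -
  obtain u e where "run A u e" "rcw_of zero_val u e = \<gamma>" "fst (final_of (init A) zero_val u e) = l"
    using assms(2) unfolding reaches_def Let_def case_prod_beta by auto
  then obtain \<nu> where u: "run A u e" "rcw_of zero_val u e = \<gamma>" "final_of (init A) zero_val u e = (l, \<nu>)"
    by (metis prod.collapse)
  then have "reachable_config A l \<nu>"
    by (auto simp: reachable_config_def)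
  obtain W D where W: "run A W D" "rcw_of zero_val W D = \<gamma> @ \<gamma>'"
    using assms(3) by (auto simp: vs_def valid_rc_def)
  obtain w d where "W = u @ w" and "D = e @ d" and cont: "is_run A l \<nu> w d" "tword A w" "rcw_of \<nu> w d = \<gamma>'"
    using CTA_run_split[OF assms(1) W u] .
  then have "final_of (init A) zero_val W D = final_of l \<nu> w d"
    using final_of_append[OF _ u(3)] u(1) by (auto simp: run_def dest: is_run_length)
  then have "\<gamma> @ \<gamma>' \<in> Lr A \<longleftrightarrow> fst (final_of l \<nu> w d) \<in> acc A"
    using CTA_rcw_of_in_Lr_iff[OF assms(1) W(1)] W(2) by simp
  with \<open>reachable_config A l \<nu>\<close> cont show thesis
    by (rule that)
qed

theorem lemma3p8:
  fixes A :: "('s, 'l, 'c::finite) ta"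
    and \<gamma>1 \<gamma>2 :: "('s, 'c) rcword"
    and q :: "'l \<times> 'c val set"
  assumes "CTA A"
    and "valid_rc A \<gamma>1" and "valid_rc A \<gamma>2"
    and "reaches A \<gamma>1 q" and "reaches A \<gamma>2 q"
  shows "rc_equiv A \<gamma>1 \<gamma>2"
  unfolding rc_equiv_def
proof (intro allI ballI)
  fix \<xi> \<gamma>1' \<gamma>2'
  assume vs1: "\<gamma>1' \<in> vs A \<gamma>1 \<xi>" and vs2: "\<gamma>2' \<in> vs A \<gamma>2 \<xi>"
  obtain l R where q: "q = (l, R)"
    by fastforce
  obtain \<nu>1 w1 d1 where reach1: "reachable_config A l \<nu>1" and run1: "is_run A l \<nu>1 w1 d1"
      and "tword A w1" and rcw1: "rcw_of \<nu>1 w1 d1 = \<gamma>1'"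
      and Lr1: "\<gamma>1 @ \<gamma>1' \<in> Lr A \<longleftrightarrow> fst (final_of l \<nu>1 w1 d1) \<in> acc A"
    using CTA_vs_continuation[OF assms(1) assms(4)[unfolded q] vs1] .
  obtain \<nu>2 w2 d2 where reach2: "reachable_config A l \<nu>2" and run2: "is_run A l \<nu>2 w2 d2"
      and "tword A w2" and rcw2: "rcw_of \<nu>2 w2 d2 = \<gamma>2'"
      and Lr2: "\<gamma>2 @ \<gamma>2' \<in> Lr A \<longleftrightarrow> fst (final_of l \<nu>2 w2 d2) \<in> acc A"
    using CTA_vs_continuation[OF assms(1) assms(5)[unfolded q] vs2] .
  have "region_word A \<gamma>1' = region_word A \<gamma>2'"
    using vs1 vs2 by (simp add: vs_def)
  then have "d1 = d2"
    using CTA_same_region_word_same_transitions[OF assms(1) reach1 reach2 run1 \<open>tword A w1\<close>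
        run2 \<open>tword A w2\<close>] rcw1 rcw2 by simp
  moreover have "length w1 = length d1" and "length w2 = length d2"
    using run1 run2 by (simp_all add: is_run_length)
  ultimately have "fst (final_of l \<nu>1 w1 d1) = fst (final_of l \<nu>2 w2 d2)"
    and "resets \<gamma>1' = resets \<gamma>2'"
    using fst_final_of_same_transitions resets_rcw_of rcw1 rcw2 by metis+
  with Lr1 Lr2 show "(\<gamma>1 @ \<gamma>1' \<in> Lr A \<longleftrightarrow> \<gamma>2 @ \<gamma>2' \<in> Lr A) \<and> resets \<gamma>1' = resets \<gamma>2'"
    by simp
qed

end
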